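(* Consider $K$ arms, each a two-state irreducible Markov chain $M_i$ on $\{0,1\}$ with transition probabilities $p_{01}^i,p_{10}^i$ and stationary distribution $\pi_i=(\pi_i(0),\pi_i(1))$, rested (only the played arm changes state), with reward $r(s)=s$ when an arm in state $s$ is played. Let $\mu_i=\pi_i(1)$, assume arm 1 is optimal ($\mu_1=\max_j\mu_j$), and $\Delta_i=\mu_1-\mu_i$. Let $\alpha$ be a uniformly good policy. Then $\liminf_{n\to\infty}\frac{R_\alpha(n)}{\log n}\ge\sum_{i=2}^K\frac{\Delta_i}{I(M_i\|M_1)}$, where $I(M_i\|M_j)=\pi_i(0)D(p_{01}^i\|p_{01}^j)+\pi_i(1)D(p_{10}^i\|p_{10}^j)$.
   Context: $D(a\|b)=a\log\frac ab+(1-a)\log\frac{1-a}{1-b}$. A policy $\alpha$ chooses at each time $t$ an arm $\alpha(t)$ based on past choices and rewards; its regret is $R_\alpha(n)=n\mu_1-\mathbb E_\alpha\big[\sum_{t=1}^n r(s(\alpha(t)))\big]$, where $s(\alpha(t))$ is the state of the chosen arm at time $t$. The policy is uniformly good if, for every such bandit instance (every choice of irreducible two-state chains for the arms), $R_\alpha(n)=o(n^\beta)$ for every $\beta>0$. *)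

theory Defs
  imports "HOL-Probability.Probability" "HOL-Library.Landau_Symbols"
begin

text \<open>Arm i is a two-state chain on states False (=0) and True (=1)
  with transition probabilities p01 i (from 0 to 1) and p10 i (from 1 to 0).
  Irreducibility of a two-state chain means both transition probabilities are positive.\<close>

definition valid_instance :: "nat \<Rightarrow> (nat \<Rightarrow> real) \<Rightarrow> (nat \<Rightarrow> real) \<Rightarrow> bool" where
  "valid_instance K p01 p10 \<longleftrightarrow>
     (\<forall>i\<in>{1..K}. 0 < p01 i \<and> p01 i \<le> 1 \<and> 0 < p10 i \<and> p10 i \<le> 1)"

definition pi1 :: "(nat \<Rightarrow> real) \<Rightarrow> (nat \<Rightarrow> real) \<Rightarrow> nat \<Rightarrow> real" where
  "pi1 p01 p10 i = p01 i / (p01 i + p10 i)"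

definition pi0 :: "(nat \<Rightarrow> real) \<Rightarrow> (nat \<Rightarrow> real) \<Rightarrow> nat \<Rightarrow> real" where
  "pi0 p01 p10 i = p10 i / (p01 i + p10 i)"

definition mu :: "(nat \<Rightarrow> real) \<Rightarrow> (nat \<Rightarrow> real) \<Rightarrow> nat \<Rightarrow> real" where
  "mu p01 p10 i = pi1 p01 p10 i"

definition mu_star :: "nat \<Rightarrow> (nat \<Rightarrow> real) \<Rightarrow> (nat \<Rightarrow> real) \<Rightarrow> real" where
  "mu_star K p01 p10 = Max (mu p01 p10 ` {1..K})"

text \<open>Bernoulli KL divergence D(a||b), extended-real valued (value \<infinity> when absolute
  continuity fails), with the convention 0 log 0 = 0.\<close>
definition xlogxy :: "real \<Rightarrow> real \<Rightarrow> real" where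
  "xlogxy x y = (if x = 0 then 0 else x * ln (x / y))"

definition bern_kl :: "real \<Rightarrow> real \<Rightarrow> ereal" where
  "bern_kl a b =
     (if (b = 0 \<and> a \<noteq> 0) \<or> (b = 1 \<and> a \<noteq> 1) then \<infinity>
      else ereal (xlogxy a b + xlogxy (1 - a) (1 - b)))"

definition kl_rate :: "(nat \<Rightarrow> real) \<Rightarrow> (nat \<Rightarrow> real) \<Rightarrow> nat \<Rightarrow> nat \<Rightarrow> ereal" where
  "kl_rate p01 p10 i j =
     ereal (pi0 p01 p10 i) * bern_kl (p01 i) (p01 j) + ereal (pi1 p01 p10 i) * bern_kl (p10 i) (p10 j)"

text \<open>Histories: list of (chosen arm, observed state = reward) pairs, oldest first.
  A (possibly randomised) policy maps a history to a distribution over arms.\<close>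
type_synonym history = "(nat \<times> bool) list"
type_synonym policy = "history \<Rightarrow> nat pmf"

definition is_policy :: "nat \<Rightarrow> policy \<Rightarrow> bool" where
  "is_policy K pol \<longleftrightarrow> (\<forall>h. set_pmf (pol h) \<subseteq> {1..K})"

text \<open>Rested dynamics: the state of arm a when it is played is its initial state if it was never
  played before, otherwise it is obtained by one transition of chain a from the last observed
  state of arm a (arms not played do not change state).\<close>
definition next_state :: "(nat \<Rightarrow> real) \<Rightarrow> (nat \<Rightarrow> real) \<Rightarrow> (nat \<Rightarrow> bool) \<Rightarrow> history \<Rightarrow> nat \<Rightarrow> bool pmf" where
  "next_state p01 p10 init h a =
     (let obs = map snd (filter (\<lambda>x. fst x = a) h) in
      if obs = [] then return_pmf (init a)
      else if last obs then bernoulli_pmf (1 - p10 a) else bernoulli_pmf (p01 a))"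

fun traj :: "policy \<Rightarrow> (nat \<Rightarrow> real) \<Rightarrow> (nat \<Rightarrow> real) \<Rightarrow> (nat \<Rightarrow> bool) \<Rightarrow> nat \<Rightarrow> history pmf" where
  "traj pol p01 p10 init 0 = return_pmf []"
| "traj pol p01 p10 init (Suc n) =
     bind_pmf (traj pol p01 p10 init n) (\<lambda>h.
     bind_pmf (pol h) (\<lambda>a.
     map_pmf (\<lambda>s. h @ [(a, s)]) (next_state p01 p10 init h a)))"

definition total_reward :: "history \<Rightarrow> real" where
  "total_reward h = sum_list (map (\<lambda>x. of_bool (snd x)) h)"

definition regret :: "nat \<Rightarrow> policy \<Rightarrow> (nat \<Rightarrow> real) \<Rightarrow> (nat \<Rightarrow> real) \<Rightarrow> (nat \<Rightarrow> bool) \<Rightarrow> nat \<Rightarrow> real" where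
  "regret K pol p01 p10 init n =
     real n * mu_star K p01 p10 - measure_pmf.expectation (traj pol p01 p10 init n) total_reward"

definition uniformly_good :: "nat \<Rightarrow> policy \<Rightarrow> bool" where
  "uniformly_good K pol \<longleftrightarrow> is_policy K pol \<and>
     (\<forall>p01 p10 init. valid_instance K p01 p10 \<longrightarrow>
        (\<forall>\<beta>>0. (\<lambda>n. regret K pol p01 p10 init n) \<in> o(\<lambda>n. real n powr \<beta>)))"

end

theory Submission
  imports Defs "HOL-Real_Asymp.Real_Asymp"
begin

(* Regret equals the sum over arms a of Delta_a times the expected number of plays of a, up to
   a bounded error: the two-state chain mixes geometrically, since the compensator of the centred
   reward of an arm is lam = 1 - p01 - p10 times its last centred reward, so the expected centred
   reward stays bounded.
   For a suboptimal arm i, replace its parameters by those of a chain slightly better than arm 1.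
   Uniform goodness makes the event "arm i is played at most n/2 times" have probability close
   to 1 under the original instance and at most n powr (beta - 1) under the perturbed one, which
   forces the expected log-likelihood ratio of the two instances to be at least
   (1 - o(1)) ln n. By the same compensator argument this ratio is the information rate of arm i
   against the perturbed chain times the expected number of plays of arm i, up to O(1). Letting
   the perturbation tend to arm 1 gives E N_i >= (1 - o(1)) ln n / I(M_i || M_1). *)

section \<open>Histories generated by a policy and an observation kernel\<close>

text \<open>A kernel gives the law of the state observed when arm a is played after history h.\<close>
type_synonym kernel = "history \<Rightarrow> nat \<Rightarrow> bool pmf"

fun history_pmf :: "policy \<Rightarrow> kernel \<Rightarrow> nat \<Rightarrow> history pmf" where
  "history_pmf pol ns 0 = return_pmf []"
| "history_pmf pol ns (Suc n) =
     bind_pmf (history_pmf pol ns n) (\<lambda>h. bind_pmf (pol h) (\<lambda>a. map_pmf (\<lambda>s. h @ [(a, s)]) (ns h a)))"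

lemma traj_eq_history_pmf: "traj pol p01 p10 init n = history_pmf pol (next_state p01 p10 init) n"
  by (induction n) auto

definition finite_policy :: "policy \<Rightarrow> bool" where
  "finite_policy pol \<longleftrightarrow> (\<forall>h. finite (set_pmf (pol h)))"

lemma is_policy_imp_finite_policy: "is_policy K pol \<Longrightarrow> finite_policy pol"
  unfolding is_policy_def finite_policy_def by (meson finite_atLeastAtMost finite_subset)

lemma finite_set_pmf_bool [simp]: "finite (set_pmf (M :: bool pmf))"
  by (rule finite_subset[of _ UNIV]) auto

lemma finite_set_pmf_history_pmf: "finite_policy pol \<Longrightarrow> finite (set_pmf (history_pmf pol ns n))"
  by (induction n) (auto simp: finite_policy_def)

lemma set_pmf_history_pmf:
  assumes "is_policy K pol" "h \<in> set_pmf (history_pmf pol ns n)"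
  shows "length h = n" "\<forall>x\<in>set h. fst x \<in> {1..K}"
  using assms(2)
proof (induction n arbitrary: h)
  case (Suc n)
  { case 1 with Suc.IH show ?case by auto }
  { case 2 with Suc.IH assms(1) show ?case unfolding is_policy_def by (fastforce simp: subset_iff) }
qed auto

abbreviation EE :: "'a pmf \<Rightarrow> ('a \<Rightarrow> real) \<Rightarrow> real" where
  "EE M f \<equiv> measure_pmf.expectation M f"

lemma expectation_finite_sum: "finite (set_pmf M) \<Longrightarrow> EE M f = (\<Sum>x\<in>set_pmf M. pmf M x * f x)"
  by (subst integral_measure_pmf_real[of "set_pmf M"]) (auto simp: mult.commute)

lemma expectation_add: "finite (set_pmf M) \<Longrightarrow> EE M (\<lambda>x. f x + g x) = EE M f + EE M g"
  by (intro Bochner_Integration.integral_add integrable_measure_pmf_finite)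

lemma expectation_diff: "finite (set_pmf M) \<Longrightarrow> EE M (\<lambda>x. f x - g x) = EE M f - EE M g"
  by (intro Bochner_Integration.integral_diff integrable_measure_pmf_finite)

lemma expectation_sum: "finite (set_pmf M) \<Longrightarrow> EE M (\<lambda>x. \<Sum>i\<in>A. f i x) = (\<Sum>i\<in>A. EE M (f i))"
  by (intro Bochner_Integration.integral_sum integrable_measure_pmf_finite)

lemma expectation_mono:
  "finite (set_pmf M) \<Longrightarrow> (\<And>x. x \<in> set_pmf M \<Longrightarrow> f x \<le> g x) \<Longrightarrow> EE M f \<le> EE M g"
  by (simp add: expectation_finite_sum sum_mono mult_left_mono)

lemma expectation_nonneg: "finite (set_pmf M) \<Longrightarrow> (\<And>x. x \<in> set_pmf M \<Longrightarrow> 0 \<le> f x) \<Longrightarrow> 0 \<le> EE M f"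
  using expectation_mono[of M "\<lambda>_. 0" f] by simp

lemma expectation_cong: "(\<And>x. x \<in> set_pmf M \<Longrightarrow> f x = g x) \<Longrightarrow> EE M f = EE M g"
  by (rule integral_cong_AE) (auto simp: AE_measure_pmf_iff)

lemma expectation_abs_le: "finite (set_pmf M) \<Longrightarrow> \<bar>EE M f\<bar> \<le> EE M (\<lambda>x. \<bar>f x\<bar>)"
  by (simp add: expectation_finite_sum, rule order.trans[OF sum_abs]) (simp add: abs_mult)

lemma expectation_bool: "EE (M :: bool pmf) f = pmf M True * f True + pmf M False * f False"
  by (subst integral_measure_pmf[of UNIV]) (auto simp: UNIV_bool)

lemma expectation_indicator_le_1: "EE M (\<lambda>x. of_bool (B x)) \<le> 1"
proof -
  have "(\<lambda>x. of_bool (B x) :: real) = indicator {x. B x}"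
    by (auto simp: indicator_def fun_eq_iff)
  then show ?thesis using measure_pmf.prob_le_1[of M "{x. B x}"] by simp
qed

lemma expectation_bind_finite:
  assumes "finite (set_pmf p)" "\<And>x. x \<in> set_pmf p \<Longrightarrow> finite (set_pmf (f x))"
  shows "EE (bind_pmf p f) g = EE p (\<lambda>x. EE (f x) g)"
proof -
  have "EE (bind_pmf p f) g = (\<Sum>a\<in>set_pmf p. pmf p a *\<^sub>R EE (f a) g)"
    by (rule pmf_expectation_bind) (use assms in auto)
  also have "\<dots> = EE p (\<lambda>x. EE (f x) g)"
    by (subst integral_measure_pmf[of "set_pmf p"]) (use assms in auto)
  finally show ?thesis .
qed

lemma expectation_history_pmf_Suc:
  assumes "finite_policy pol"
  shows "EE (history_pmf pol ns (Suc n)) F =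
    EE (history_pmf pol ns n) (\<lambda>h. EE (pol h) (\<lambda>a. EE (ns h a) (\<lambda>s. F (h @ [(a, s)]))))"
  using assms
  by (simp add: expectation_bind_finite finite_set_pmf_history_pmf finite_policy_def)

section \<open>Additive functionals and their compensators\<close>

definition cumulative :: "(history \<Rightarrow> nat \<times> bool \<Rightarrow> real) \<Rightarrow> history \<Rightarrow> real" where
  "cumulative inc h = (\<Sum>t<length h. inc (take t h) (h ! t))"

lemma cumulative_Nil [simp]: "cumulative inc [] = 0"
  by (simp add: cumulative_def)

lemma cumulative_snoc [simp]: "cumulative inc (h @ [x]) = cumulative inc h + inc h x"
  unfolding cumulative_def by (simp add: nth_append)

definition compensator :: "kernel \<Rightarrow> (history \<Rightarrow> nat \<times> bool \<Rightarrow> real) \<Rightarrow> history \<Rightarrow> nat \<times> bool \<Rightarrow> real" where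
  "compensator ns inc h x = EE (ns h (fst x)) (\<lambda>s. inc h (fst x, s))"

lemma expectation_cumulative_compensator:
  assumes "finite_policy pol"
  shows "EE (history_pmf pol ns n) (cumulative inc) = EE (history_pmf pol ns n) (cumulative (compensator ns inc))"
proof (induction n)
  case (Suc n)
  let ?P = "history_pmf pol ns n"
  have fin: "finite (set_pmf ?P)" "\<And>h. finite (set_pmf (pol h))"
    using assms finite_set_pmf_history_pmf by (auto simp: finite_policy_def)
  have step: "EE (history_pmf pol ns (Suc n)) (cumulative g) =
      EE ?P (cumulative g) + EE ?P (\<lambda>h. EE (pol h) (\<lambda>a. EE (ns h a) (\<lambda>s. g h (a, s))))" for g
    by (simp only: expectation_history_pmf_Suc[OF assms] cumulative_snoc)
      (simp add: expectation_add fin)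
  have "EE (ns h a) (\<lambda>s. compensator ns inc h (a, s)) = EE (ns h a) (\<lambda>s. inc h (a, s))" for h a
    by (simp add: compensator_def)
  then show ?case
    using Suc.IH step[of inc] step[of "compensator ns inc"] by simp
qed simp

section \<open>Change of measure\<close>

definition llr :: "kernel \<Rightarrow> kernel \<Rightarrow> history \<Rightarrow> nat \<times> bool \<Rightarrow> real" where
  "llr ns ns' h x = ln (pmf (ns h (fst x)) (snd x) / pmf (ns' h (fst x)) (snd x))"

definition kernel_abscont :: "kernel \<Rightarrow> kernel \<Rightarrow> bool" where
  "kernel_abscont ns ns' \<longleftrightarrow> (\<forall>h a s. pmf (ns h a) s > 0 \<longrightarrow> pmf (ns' h a) s > 0)"

lemma expectation_llr_step_le:
  assumes ac: "kernel_abscont ns ns'" and F: "\<And>s. 0 \<le> F s"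
  shows "EE (ns h a) (\<lambda>s. F s * exp (- llr ns ns' h (a, s))) \<le> EE (ns' h a) F"
proof -
  have "pmf (ns h a) s * (F s * exp (- llr ns ns' h (a, s))) \<le> pmf (ns' h a) s * F s" for s
  proof (cases "pmf (ns h a) s > 0")
    case True
    then have "pmf (ns' h a) s > 0" using ac by (auto simp: kernel_abscont_def)
    then show ?thesis using True by (simp add: llr_def ln_div exp_diff)
  next
    case False
    then have "pmf (ns h a) s = 0" using pmf_nonneg[of "ns h a" s] by linarith
    then show ?thesis using F[of s] by simp
  qed
  then show ?thesis by (simp add: expectation_bool add_mono)
qed

lemma expectation_change_of_measure:
  assumes "finite_policy pol" "kernel_abscont ns ns'" "\<And>h. 0 \<le> F h"
  shows "EE (history_pmf pol ns n) (\<lambda>h. F h * exp (- cumulative (llr ns ns') h)) \<le> EE (history_pmf pol ns' n) F"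
  using assms(3)
proof (induction n arbitrary: F)
  case (Suc n)
  have fp: "\<And>h. finite (set_pmf (pol h))" using assms by (simp add: finite_policy_def)
  define G where "G h = EE (pol h) (\<lambda>a. EE (ns h a) (\<lambda>s. F (h @ [(a,s)]) * exp (- llr ns ns' h (a, s))))" for h
  have G0: "0 \<le> G h" for h
    unfolding G_def by (intro expectation_nonneg fp finite_set_pmf_bool mult_nonneg_nonneg Suc.prems) auto
  have "EE (history_pmf pol ns (Suc n)) (\<lambda>h. F h * exp (- cumulative (llr ns ns') h))
      = EE (history_pmf pol ns n) (\<lambda>h. EE (pol h) (\<lambda>a. EE (ns h a)
          (\<lambda>s. (F (h @ [(a,s)]) * exp (- llr ns ns' h (a, s))) * exp (- cumulative (llr ns ns') h))))"
    by (simp only: expectation_history_pmf_Suc[OF assms(1)] cumulative_snoc minus_add_distrib exp_add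
        mult.assoc) (simp only: mult.commute)
  also have "\<dots> = EE (history_pmf pol ns n) (\<lambda>h. G h * exp (- cumulative (llr ns ns') h))"
    by (simp only: G_def integral_mult_left_zero)
  also have "\<dots> \<le> EE (history_pmf pol ns' n) G"
    using Suc.IH G0 .
  also have "\<dots> \<le> EE (history_pmf pol ns' (Suc n)) F"
    unfolding G_def expectation_history_pmf_Suc[OF assms(1)]
    by (intro expectation_mono finite_set_pmf_history_pmf assms fp expectation_llr_step_le Suc.prems)
  finally show ?case .
qed simp

lemma exp_minus_ge_tangent: "exp (- m) * (1 + m - y) \<le> exp (- (y::real))"
proof -
  have "1 + m - y \<le> exp (m - y)"
    using exp_ge_add_one_self[of "m - y"] by (simp only: add_diff_eq)
  then have "exp (- m) * (1 + m - y) \<le> exp (- m) * exp (m - y)"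
    by (intro mult_left_mono) auto
  also have "\<dots> = exp (- y)" by (simp add: exp_add[symmetric])
  finally show ?thesis .
qed

lemma x_ln_x_ge_minus_one: "0 \<le> (x::real) \<Longrightarrow> -1 \<le> x * ln x"
proof (cases "x = 0")
  case False
  assume "0 \<le> x"
  with False have x: "x > 0" by simp
  have "- ln x \<le> 1/x - 1" using ln_le_minus_one[of "1/x"] x by (simp add: ln_div)
  then have "x * (- ln x) \<le> x * (1/x - 1)" using x by (intro mult_left_mono) auto
  then show ?thesis using x by (simp add: algebra_simps)
qed simp

context
  fixes P P' :: "'a pmf" and L :: "'a \<Rightarrow> real"
  assumes fin: "finite (set_pmf P)"
    and change_of_measure: "\<And>F. (\<And>x. 0 \<le> F x) \<Longrightarrow> EE P (\<lambda>x. F x * exp (- L x)) \<le> EE P' F"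
begin

text \<open>Linearising exp at the conditional mean of L on B gives a Jensen-type bound.\<close>
lemma prob_change_of_measure:
  assumes p: "0 < EE P (\<lambda>x. of_bool (B x))"
  shows "exp (- (EE P (\<lambda>x. of_bool (B x) * L x) / EE P (\<lambda>x. of_bool (B x)))) * EE P (\<lambda>x. of_bool (B x))
      \<le> EE P' (\<lambda>x. of_bool (B x))"
proof -
  define p where "p = EE P (\<lambda>x. of_bool (B x))"
  define q where "q = EE P (\<lambda>x. of_bool (B x) * L x)"
  define m where "m = q / p"
  have "(1 + m) * p - q = p"
    using p by (simp add: m_def p_def field_simps)
  then have "exp (- m) * p = EE P (\<lambda>x. exp (- m) * ((1 + m) * of_bool (B x) - of_bool (B x) * L x))"
    by (simp add: expectation_diff fin p_def q_def)
  also have "\<dots> \<le> EE P (\<lambda>x. of_bool (B x) * exp (- L x))"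
    using exp_minus_ge_tangent[where m=m]
    by (intro expectation_mono fin) (auto simp: algebra_simps)
  also have "\<dots> \<le> EE P' (\<lambda>x. of_bool (B x))"
    by (rule change_of_measure) simp
  finally show ?thesis by (simp add: m_def p_def q_def)
qed

lemma prob_pos_change_of_measure:
  assumes p: "0 < EE P (\<lambda>x. of_bool (B x))"
  shows "0 < EE P' (\<lambda>x. of_bool (B x))"
  using p prob_change_of_measure[OF p] by (meson exp_gt_zero mult_pos_pos order_less_le_trans)

lemma expectation_on_event_ge:
  assumes p: "0 < EE P (\<lambda>x. of_bool (B x))"
  shows "EE P (\<lambda>x. of_bool (B x)) * ln (EE P (\<lambda>x. of_bool (B x)))
      - EE P (\<lambda>x. of_bool (B x)) * ln (EE P' (\<lambda>x. of_bool (B x))) \<le> EE P (\<lambda>x. of_bool (B x) * L x)"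
proof -
  define p where "p = EE P (\<lambda>x. of_bool (B x))"
  define p' where "p' = EE P' (\<lambda>x. of_bool (B x))"
  define q where "q = EE P (\<lambda>x. of_bool (B x) * L x)"
  have "p > 0" "p' > 0" using p prob_pos_change_of_measure by (auto simp: p_def p'_def)
  have "ln (exp (- (q / p)) * p) \<le> ln p'"
    using prob_change_of_measure[OF p] \<open>p > 0\<close> \<open>p' > 0\<close> by (simp add: p_def p'_def q_def)
  then have "p * (ln p - ln p') \<le> p * (q / p)" using \<open>p > 0\<close> by (intro mult_left_mono) (auto simp: ln_mult)
  then show ?thesis using \<open>p > 0\<close> by (simp add: p_def p'_def q_def algebra_simps)
qed

lemma expectation_on_event_ge_minus_one: "-1 \<le> EE P (\<lambda>x. of_bool (B x) * L x)"
proof (cases "EE P (\<lambda>x. of_bool (B x)) > 0")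
  case True
  let ?p = "EE P (\<lambda>x. of_bool (B x))" and ?p' = "EE P' (\<lambda>x. of_bool (B x))"
  have "?p * ln ?p' \<le> 0"
    using True prob_pos_change_of_measure[OF True] expectation_indicator_le_1[of P' B]
    by (intro mult_nonneg_nonpos) auto
  moreover have "-1 \<le> ?p * ln ?p" using True by (intro x_ln_x_ge_minus_one) auto
  ultimately show ?thesis using expectation_on_event_ge[OF True] by linarith
next
  case False
  have "0 \<le> EE P (\<lambda>x. of_bool (B x))"
    by (rule expectation_nonneg[OF fin]) simp
  then have "EE P (\<lambda>x. of_bool (B x)) = 0"
    using False by linarith
  then have "\<forall>x\<in>set_pmf P. pmf P x * of_bool (B x) = 0"
    by (subst (asm) expectation_finite_sum[OF fin], subst (asm) sum_nonneg_eq_0_iff) (auto simp: fin)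
  then have "EE P (\<lambda>x. of_bool (B x) * L x) = 0"
    unfolding expectation_finite_sum[OF fin] by (intro sum.neutral) auto
  then show ?thesis by simp
qed

lemma expectation_ge_event_prob:
  assumes p: "0 < EE P (\<lambda>x. of_bool (B x))"
  shows "- EE P (\<lambda>x. of_bool (B x)) * ln (EE P' (\<lambda>x. of_bool (B x))) - 2 \<le> EE P L"
proof -
  have "EE P L = EE P (\<lambda>x. of_bool (B x) * L x + of_bool (\<not> B x) * L x)"
    by (rule expectation_cong) auto
  also have "\<dots> = EE P (\<lambda>x. of_bool (B x) * L x) + EE P (\<lambda>x. of_bool (\<not> B x) * L x)"
    by (rule expectation_add[OF fin])
  finally have "EE P L = EE P (\<lambda>x. of_bool (B x) * L x) + EE P (\<lambda>x. of_bool (\<not> B x) * L x)" .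
  moreover have "-1 \<le> EE P (\<lambda>x. of_bool (B x)) * ln (EE P (\<lambda>x. of_bool (B x)))"
    using p by (intro x_ln_x_ge_minus_one) auto
  ultimately show ?thesis
    using expectation_on_event_ge[OF p] expectation_on_event_ge_minus_one[of "\<lambda>x. \<not> B x"]
    by linarith
qed

lemma expectation_ge_log_of_event_bounds:
  fixes t \<beta> \<delta> :: real
  assumes pB: "1 - \<delta> \<le> EE P (\<lambda>x. of_bool (B x))" and \<delta>: "\<delta> < 1"
    and qB: "EE P' (\<lambda>x. of_bool (B x)) \<le> t powr (\<beta> - 1)" and t: "1 \<le> t" and \<beta>: "\<beta> \<le> 1"
  shows "(1 - \<delta>) * (1 - \<beta>) * ln t - 2 \<le> EE P L"
proof -
  have p: "0 < EE P (\<lambda>x. of_bool (B x))" using pB \<delta> by linarith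
  have "0 < EE P' (\<lambda>x. of_bool (B x))" by (rule prob_pos_change_of_measure[OF p])
  then have "ln (EE P' (\<lambda>x. of_bool (B x))) \<le> (\<beta> - 1) * ln t"
    using qB t by (metis ln_le_cancel_iff ln_powr order_less_le_trans powr_gt_zero)
  moreover have "0 \<le> (1 - \<beta>) * ln t" using t \<beta> by simp
  ultimately have "(1 - \<delta>) * ((1 - \<beta>) * ln t) \<le>
      EE P (\<lambda>x. of_bool (B x)) * (- ln (EE P' (\<lambda>x. of_bool (B x))))"
    using pB \<delta> by (intro mult_mono) (auto simp: algebra_simps)
  then show ?thesis using expectation_ge_event_prob[OF p] by (simp add: algebra_simps)
qed

end

section \<open>Plays and rewards of the two-state arms\<close>

definition arm_obs :: "nat \<Rightarrow> history \<Rightarrow> bool list" where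
  "arm_obs a h = map snd (filter (\<lambda>x. fst x = a) h)"

lemma arm_obs_Nil [simp]: "arm_obs a [] = []"
  by (simp add: arm_obs_def)

lemma arm_obs_snoc [simp]: "arm_obs a (h @ [x]) = (if fst x = a then arm_obs a h @ [snd x] else arm_obs a h)"
  by (simp add: arm_obs_def)

lemma next_state_eq_arm_obs:
  "next_state p01 p10 init h a =
    (if arm_obs a h = [] then return_pmf (init a)
     else if last (arm_obs a h) then bernoulli_pmf (1 - p10 a) else bernoulli_pmf (p01 a))"
  by (simp add: next_state_def arm_obs_def Let_def)

definition plays :: "nat \<Rightarrow> history \<Rightarrow> real" where
  "plays a h = real (length (arm_obs a h))"

lemma plays_Nil [simp]: "plays a [] = 0"
  by (simp add: plays_def)

lemma plays_snoc [simp]: "plays a (h @ [x]) = plays a h + of_bool (fst x = a)"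
  by (simp add: plays_def)

lemma plays_nonneg: "0 \<le> plays a h"
  by (simp add: plays_def)

lemma plays_unplayed: "arm_obs a h = [] \<Longrightarrow> plays a h = 0"
  by (simp add: plays_def)

definition centred_inc :: "real \<Rightarrow> nat \<Rightarrow> history \<Rightarrow> nat \<times> bool \<Rightarrow> real" where
  "centred_inc m a h x = (if fst x = a then of_bool (snd x) - m else 0)"

abbreviation centred_reward :: "real \<Rightarrow> nat \<Rightarrow> history \<Rightarrow> real" where
  "centred_reward m a \<equiv> cumulative (centred_inc m a)"

lemma centred_reward_snoc:
  "centred_reward m a (h @ [x]) = centred_reward m a h + (if fst x = a then of_bool (snd x) - m else 0)"
  by (simp add: centred_inc_def)

lemma centred_reward_unplayed: "arm_obs a h = [] \<Longrightarrow> centred_reward m a h = 0"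
  by (induction h rule: rev_induct) (auto simp: centred_inc_def split: if_splits)

text \<open>After the first play of arm a, the expected next centred reward is the last one damped by
  the factor lam = 1 - p01 a - p10 a.\<close>
definition centred_drift :: "real \<Rightarrow> real \<Rightarrow> bool \<Rightarrow> nat \<Rightarrow> history \<Rightarrow> nat \<times> bool \<Rightarrow> real" where
  "centred_drift m lam b0 a h x = (if fst x = a then
     (if arm_obs a h = [] then of_bool b0 - m else lam * (of_bool (last (arm_obs a h)) - m)) else 0)"

lemma expectation_centred_bernoulli:
  "0 \<le> q \<Longrightarrow> q \<le> 1 \<Longrightarrow> EE (bernoulli_pmf q) (\<lambda>s. of_bool s - m) = q - m"
  by (simp add: expectation_bool algebra_simps)

lemma mu_mean_reversion:
  assumes "0 < p01 a" "p01 a \<le> 1" "0 < p10 a" "p10 a \<le> 1"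
  shows "EE (bernoulli_pmf (1 - p10 a)) (\<lambda>s. of_bool s - mu p01 p10 a) =
      (1 - p01 a - p10 a) * (1 - mu p01 p10 a)"
    and "EE (bernoulli_pmf (p01 a)) (\<lambda>s. of_bool s - mu p01 p10 a) =
      (1 - p01 a - p10 a) * (- mu p01 p10 a)"
proof -
  have "p01 a + p10 a > 0" using assms by simp
  then have "(1 - p10 a) - mu p01 p10 a = (1 - p01 a - p10 a) * (1 - mu p01 p10 a)"
    and "p01 a - mu p01 p10 a = (1 - p01 a - p10 a) * (- mu p01 p10 a)"
    by (simp_all add: mu_def pi1_def field_simps)
  with assms show "EE (bernoulli_pmf (1 - p10 a)) (\<lambda>s. of_bool s - mu p01 p10 a) =
      (1 - p01 a - p10 a) * (1 - mu p01 p10 a)"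
    and "EE (bernoulli_pmf (p01 a)) (\<lambda>s. of_bool s - mu p01 p10 a) =
      (1 - p01 a - p10 a) * (- mu p01 p10 a)"
    by (subst expectation_centred_bernoulli; simp)+
qed

lemma compensator_centred_inc:
  assumes "0 < p01 a" "p01 a \<le> 1" "0 < p10 a" "p10 a \<le> 1"
  shows "compensator (next_state p01 p10 init) (centred_inc (mu p01 p10 a) a) =
         centred_drift (mu p01 p10 a) (1 - p01 a - p10 a) (init a) a"
proof (intro ext)
  fix h x
  show "compensator (next_state p01 p10 init) (centred_inc (mu p01 p10 a) a) h x =
         centred_drift (mu p01 p10 a) (1 - p01 a - p10 a) (init a) a h x"
  proof (cases "fst x = a")
    case True
    then show ?thesis
      unfolding compensator_def centred_drift_def centred_inc_def
      using mu_mean_reversion[of p01 a p10, OF assms] by (auto simp: next_state_eq_arm_obs)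
  qed (simp add: compensator_def centred_drift_def centred_inc_def)
qed

lemma cumulative_centred_drift_snoc:
  "cumulative (centred_drift m lam b0 a) (h @ [x]) = cumulative (centred_drift m lam b0 a) h +
    (if fst x = a then (if arm_obs a h = [] then of_bool b0 - m
     else lam * (of_bool (last (arm_obs a h)) - m)) else 0)"
  by (simp add: centred_drift_def)

lemma cumulative_centred_drift:
  "cumulative (centred_drift m lam b0 a) h = (if arm_obs a h = [] then 0
     else (of_bool b0 - m) + lam * (centred_reward m a h - (of_bool (last (arm_obs a h)) - m)))"
proof (induction h rule: rev_induct)
  case (snoc x h)
  then show ?case
    using centred_reward_unplayed[of a h m]
    by (simp only: cumulative_centred_drift_snoc centred_reward_snoc arm_obs_snoc)
      (cases "fst x = a"; simp add: algebra_simps)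
qed simp

text \<open>The compensated centred reward is lam times the centred reward up to a bounded error,
  and the expectations of both agree.\<close>
lemma expectation_centred_reward_bound:
  assumes fp: "finite_policy pol" and "0 < p01 a" "p01 a \<le> 1" "0 < p10 a" "p10 a \<le> 1"
  shows "\<bar>EE (traj pol p01 p10 init n) (centred_reward (mu p01 p10 a) a)\<bar> \<le> 2 / (p01 a + p10 a)"
proof -
  define m where "m = mu p01 p10 a"
  define lam where "lam = 1 - p01 a - p10 a"
  let ?P = "traj pol p01 p10 init n"
  have fin: "finite (set_pmf ?P)" unfolding traj_eq_history_pmf by (rule finite_set_pmf_history_pmf[OF fp])
  have pos: "p01 a + p10 a > 0" using assms by simp
  have m01: "0 \<le> m" "m \<le> 1" using assms unfolding m_def mu_def pi1_def by (auto simp: field_simps)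
  have lam1: "\<bar>lam\<bar> \<le> 1" using assms unfolding lam_def by auto
  have dev: "\<bar>of_bool b - m\<bar> \<le> 1" for b using m01 by (cases b) auto
  define W where "W h = (if arm_obs a h = [] then 0
    else (of_bool (init a) - m) - lam * (of_bool (last (arm_obs a h)) - m))" for h
  have "EE ?P (centred_reward m a) = EE ?P (cumulative (centred_drift m lam (init a) a))"
    unfolding traj_eq_history_pmf m_def lam_def
    by (subst expectation_cumulative_compensator[OF fp]) (simp add: compensator_centred_inc assms)
  also have "\<dots> = EE ?P (\<lambda>h. W h + lam * centred_reward m a h)"
    by (intro expectation_cong)
      (auto simp: cumulative_centred_drift W_def centred_reward_unplayed algebra_simps)
  also have "\<dots> = EE ?P W + lam * EE ?P (centred_reward m a)"
    by (simp add: expectation_add fin)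
  finally have eq: "(1 - lam) * EE ?P (centred_reward m a) = EE ?P W"
    by (simp add: algebra_simps)
  have "\<bar>W h\<bar> \<le> 2" for h
  proof -
    have "\<bar>lam * (of_bool (last (arm_obs a h)) - m)\<bar> \<le> 1"
      using lam1 dev by (simp add: abs_mult mult_le_one)
    then show ?thesis using dev[of "init a"] unfolding W_def by auto
  qed
  then have "EE ?P (\<lambda>h. \<bar>W h\<bar>) \<le> 2"
    using expectation_mono[OF fin, of "\<lambda>h. \<bar>W h\<bar>" "\<lambda>_. 2"] by simp
  then have "\<bar>EE ?P W\<bar> \<le> 2"
    using expectation_abs_le[OF fin, of W] by linarith
  then have "(p01 a + p10 a) * \<bar>EE ?P (centred_reward m a)\<bar> \<le> 2"
    using eq pos by (simp add: lam_def abs_mult)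
  then show ?thesis using pos unfolding m_def by (simp add: field_simps)
qed

lemma set_pmf_traj:
  assumes "is_policy K pol" "h \<in> set_pmf (traj pol p01 p10 init n)"
  shows "length h = n" "\<forall>x\<in>set h. fst x \<in> {1..K}"
  using assms set_pmf_history_pmf unfolding traj_eq_history_pmf by blast+

lemma finite_set_pmf_traj: "is_policy K pol \<Longrightarrow> finite (set_pmf (traj pol p01 p10 init n))"
  unfolding traj_eq_history_pmf by (intro finite_set_pmf_history_pmf is_policy_imp_finite_policy)

lemma expected_plays_nonneg: "is_policy K pol \<Longrightarrow> 0 \<le> EE (traj pol p01 p10 init n) (plays a)"
  by (intro expectation_nonneg finite_set_pmf_traj plays_nonneg)

lemma sum_indicator_arm:
  "(x::nat) \<in> {1..K} \<Longrightarrow> (\<Sum>a\<in>{1..K}. if a = x then (c::real) else 0) = c"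
  by simp

lemma length_eq_sum_plays:
  "\<forall>x\<in>set h. fst x \<in> {1..K} \<Longrightarrow> real (length h) = (\<Sum>a\<in>{1..K}. plays a h)"
proof (induction h rule: rev_induct)
  case (snoc x h)
  then have x: "fst x \<in> {1..K}" and IH: "real (length h) = (\<Sum>a\<in>{1..K}. plays a h)" by auto
  have "plays a (h @ [x]) = plays a h + (if a = fst x then 1 else 0)" for a
    by auto
  then show ?case using IH by (simp only: sum.distrib sum_indicator_arm[OF x]) simp
qed simp

lemma sum_plays_other_arms:
  assumes "\<forall>x\<in>set h. fst x \<in> {1..K}" "i \<in> {1..K}"
  shows "(\<Sum>j\<in>{1..K} - {i}. plays j h) = real (length h) - plays i h"
  using length_eq_sum_plays[OF assms(1)] assms(2) by (simp add: sum_diff1)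

lemma total_reward_eq_sum_arms:
  "\<forall>x\<in>set h. fst x \<in> {1..K} \<Longrightarrow>
    total_reward h = (\<Sum>a\<in>{1..K}. centred_reward (m a) a h + m a * plays a h)"
proof (induction h rule: rev_induct)
  case (snoc x h)
  then have x: "fst x \<in> {1..K}"
    and IH: "total_reward h = (\<Sum>a\<in>{1..K}. centred_reward (m a) a h + m a * plays a h)" by auto
  have "centred_reward (m a) a (h @ [x]) + m a * plays a (h @ [x]) =
      centred_reward (m a) a h + m a * plays a h + (if a = fst x then of_bool (snd x) else 0)" for a
    by (auto simp: centred_inc_def algebra_simps)
  moreover have "total_reward (h @ [x]) = total_reward h + of_bool (snd x)"
    by (simp add: total_reward_def)
  ultimately show ?case using IH by (simp only: sum.distrib sum_indicator_arm[OF x])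
qed (simp add: total_reward_def)

lemma mu_star_ge: "a \<in> {1..K} \<Longrightarrow> mu p01 p10 a \<le> mu_star K p01 p10"
  unfolding mu_star_def by (rule Max_ge) auto

lemma mu_star_eq:
  "j \<in> {1..K} \<Longrightarrow> \<forall>a\<in>{1..K}. mu p01 p10 a \<le> mu p01 p10 j \<Longrightarrow> mu_star K p01 p10 = mu p01 p10 j"
  unfolding mu_star_def by (intro antisym Max.boundedI Max_ge) auto

lemma regret_gap_decomposition:
  assumes pol: "is_policy K pol" and vi: "valid_instance K p01 p10"
  shows "\<bar>regret K pol p01 p10 init n -
      (\<Sum>a\<in>{1..K}. (mu_star K p01 p10 - mu p01 p10 a) * EE (traj pol p01 p10 init n) (plays a))\<bar>
     \<le> (\<Sum>a\<in>{1..K}. 2 / (p01 a + p10 a))"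
proof -
  let ?P = "traj pol p01 p10 init n" and ?m = "mu p01 p10"
  have fin: "finite (set_pmf ?P)" by (rule finite_set_pmf_traj[OF pol])
  have "EE ?P total_reward = EE ?P (\<lambda>h. \<Sum>a\<in>{1..K}. centred_reward (?m a) a h + ?m a * plays a h)"
    by (rule expectation_cong) (rule total_reward_eq_sum_arms[OF set_pmf_traj(2)[OF pol]])
  then have reward: "EE ?P total_reward = (\<Sum>a\<in>{1..K}. EE ?P (centred_reward (?m a) a) + ?m a * EE ?P (plays a))"
    by (simp add: expectation_sum[OF fin] expectation_add[OF fin])
  have "EE ?P (\<lambda>h. \<Sum>a\<in>{1..K}. plays a h) = EE ?P (\<lambda>_. real n)"
  proof (rule expectation_cong)
    fix h assume h: "h \<in> set_pmf ?P"
    show "(\<Sum>a\<in>{1..K}. plays a h) = real n"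
      using length_eq_sum_plays[OF set_pmf_traj(2)[OF pol h]] set_pmf_traj(1)[OF pol h] by simp
  qed
  then have "real n = EE ?P (\<lambda>h. \<Sum>a\<in>{1..K}. plays a h)" by simp
  then have time: "real n = (\<Sum>a\<in>{1..K}. EE ?P (plays a))"
    by (simp add: expectation_sum[OF fin])
  have "\<bar>\<Sum>a\<in>{1..K}. EE ?P (centred_reward (?m a) a)\<bar> \<le> (\<Sum>a\<in>{1..K}. \<bar>EE ?P (centred_reward (?m a) a)\<bar>)"
    by (rule sum_abs)
  also have "\<dots> \<le> (\<Sum>a\<in>{1..K}. 2 / (p01 a + p10 a))"
    using vi unfolding valid_instance_def
    by (intro sum_mono expectation_centred_reward_bound is_policy_imp_finite_policy[OF pol]) auto
  finally show ?thesis
    unfolding regret_def reward time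
    by (simp add: sum_distrib_left sum.distrib sum_subtractf algebra_simps)
qed

lemma expected_plays_suboptimal_small:
  assumes ug: "uniformly_good K pol" and vi: "valid_instance K p01 p10"
    and j: "j \<in> {1..K}" and gap: "mu p01 p10 j < mu_star K p01 p10"
    and "\<beta> > 0" "\<epsilon> > 0"
  shows "eventually (\<lambda>n. EE (traj pol p01 p10 init n) (plays j) \<le> \<epsilon> * real n powr \<beta>) sequentially"
proof -
  define D where "D = mu_star K p01 p10 - mu p01 p10 j"
  define C where "C = (\<Sum>a\<in>{1..K}. 2 / (p01 a + p10 a))"
  have D: "D > 0" using gap by (simp add: D_def)
  have pol: "is_policy K pol" using ug by (simp add: uniformly_good_def)
  have "(\<lambda>n. regret K pol p01 p10 init n) \<in> o(\<lambda>n. real n powr \<beta>)"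
    using ug vi \<open>\<beta> > 0\<close> by (simp add: uniformly_good_def)
  then have small: "eventually (\<lambda>n. \<bar>regret K pol p01 p10 init n\<bar> \<le> (\<epsilon> * D / 2) * \<bar>real n powr \<beta>\<bar>) sequentially"
    using D \<open>\<epsilon> > 0\<close> by (auto dest!: landau_o.smallD[where c="\<epsilon> * D / 2"])
  have "filterlim (\<lambda>n. real n powr \<beta>) at_top sequentially"
    using \<open>\<beta> > 0\<close> by real_asymp
  then have large: "eventually (\<lambda>n. C / (\<epsilon> * D / 2) \<le> real n powr \<beta>) sequentially"
    by (simp add: filterlim_at_top)
  show ?thesis using small large
  proof eventually_elim
    case (elim n)
    let ?P = "traj pol p01 p10 init n"
    have "D * EE ?P (plays j) \<le> (\<Sum>a\<in>{1..K}. (mu_star K p01 p10 - mu p01 p10 a) * EE ?P (plays a))"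
      using j unfolding D_def
      by (intro member_le_sum mult_nonneg_nonneg expected_plays_nonneg[OF pol]) (auto simp: mu_star_ge)
    also have "\<dots> \<le> regret K pol p01 p10 init n + C"
      using regret_gap_decomposition[OF pol vi, of init n] unfolding C_def by linarith
    also have "\<dots> \<le> D * (\<epsilon> * real n powr \<beta>)"
      using elim D \<open>\<epsilon> > 0\<close> by (auto simp: field_simps)
    finally show ?case using D by simp
  qed
qed

section \<open>Perturbing one arm\<close>

text \<open>The perturbed arm keeps both transition probabilities strictly inside (0, 1), so that the
  original kernel is absolutely continuous with respect to the perturbed one.\<close>
definition perturbation ::
    "nat \<Rightarrow> nat \<Rightarrow> (nat \<Rightarrow> real) \<Rightarrow> (nat \<Rightarrow> real) \<Rightarrow> (nat \<Rightarrow> real) \<Rightarrow> (nat \<Rightarrow> real) \<Rightarrow> bool" where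
  "perturbation K i p01 p10 q01 q10 \<longleftrightarrow> valid_instance K p01 p10 \<and> i \<in> {1..K} \<and>
     (\<forall>j. j \<noteq> i \<longrightarrow> q01 j = p01 j \<and> q10 j = p10 j) \<and> 0 < q01 i \<and> q01 i < 1 \<and> 0 < q10 i \<and> q10 i < 1"

lemma valid_instance_perturbation: "perturbation K i p01 p10 q01 q10 \<Longrightarrow> valid_instance K q01 q10"
  unfolding perturbation_def valid_instance_def by (metis less_eq_real_def)

lemma next_state_cong:
  "p01 b = q01 b \<Longrightarrow> p10 b = q10 b \<Longrightarrow> next_state p01 p10 init h b = next_state q01 q10 init h b"
  by (simp add: next_state_def)

lemma kernel_abscont_perturbation:
  assumes "perturbation K i p01 p10 q01 q10"
  shows "kernel_abscont (next_state p01 p10 init) (next_state q01 q10 init)"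
  unfolding kernel_abscont_def
proof (intro allI impI)
  fix h a s
  assume pos: "pmf (next_state p01 p10 init h a) s > 0"
  show "pmf (next_state q01 q10 init h a) s > 0"
  proof (cases "a = i \<and> arm_obs a h \<noteq> []")
    case True
    then show ?thesis using assms by (cases s) (auto simp: next_state_eq_arm_obs perturbation_def)
  next
    case False
    then show ?thesis
      using assms pos next_state_cong[of p01 a q01 p10 q10 init h]
      by (auto simp: perturbation_def next_state_eq_arm_obs)
  qed
qed

definition bern_div :: "real \<Rightarrow> real \<Rightarrow> real" where
  "bern_div a b = xlogxy a b + xlogxy (1 - a) (1 - b)"

definition markov_kl :: "(nat \<Rightarrow> real) \<Rightarrow> (nat \<Rightarrow> real) \<Rightarrow> nat \<Rightarrow> real \<Rightarrow> real \<Rightarrow> real" where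
  "markov_kl p01 p10 i r01 r10 = pi0 p01 p10 i * bern_div (p01 i) r01 + pi1 p01 p10 i * bern_div (p10 i) r10"

text \<open>The compensator of the log-likelihood ratio: every play of arm i except the first
  contributes the divergence of the transition out of the last observed state.\<close>
definition kl_inc :: "nat \<Rightarrow> real \<Rightarrow> real \<Rightarrow> history \<Rightarrow> nat \<times> bool \<Rightarrow> real" where
  "kl_inc i d0 d1 h x = (if fst x = i \<and> arm_obs i h \<noteq> [] then (if last (arm_obs i h) then d1 else d0) else 0)"

lemma compensator_llr_perturbation:
  assumes "perturbation K i p01 p10 q01 q10"
  shows "compensator (next_state p01 p10 init) (llr (next_state p01 p10 init) (next_state q01 q10 init)) =
    kl_inc i (bern_div (p01 i) (q01 i)) (bern_div (p10 i) (q10 i))"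
proof (intro ext)
  fix h :: history and x :: "nat \<times> bool"
  obtain b s where x: "x = (b, s)" by force
  have v: "0 < p01 i" "p01 i \<le> 1" "0 < p10 i" "p10 i \<le> 1" "0 < q01 i" "q01 i < 1" "0 < q10 i" "q10 i < 1"
    using assms by (auto simp: perturbation_def valid_instance_def)
  show "compensator (next_state p01 p10 init) (llr (next_state p01 p10 init) (next_state q01 q10 init)) h x =
    kl_inc i (bern_div (p01 i) (q01 i)) (bern_div (p10 i) (q10 i)) h x"
  proof (cases "b = i")
    case True
    then show ?thesis using v
      by (cases "arm_obs i h = []")
        (simp_all add: x compensator_def llr_def kl_inc_def next_state_eq_arm_obs expectation_bool
          bern_div_def xlogxy_def)
  next
    case False
    then have "next_state q01 q10 init h b = next_state p01 p10 init h b"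
      using assms next_state_cong[of p01 b q01 p10 q10 init h] by (auto simp: perturbation_def)
    moreover have "(\<lambda>s. ln (if pmf (next_state p01 p10 init h b) s = 0 then 0 else 1)) = (\<lambda>s. 0::real)"
      by (rule ext) simp
    ultimately show ?thesis using False
      by (simp add: x compensator_def llr_def kl_inc_def)
  qed
qed

lemma cumulative_kl_inc_snoc:
  "cumulative (kl_inc i d0 d1) (h @ [x]) = cumulative (kl_inc i d0 d1) h +
   (if fst x = i \<and> arm_obs i h \<noteq> [] then (if last (arm_obs i h) then d1 else d0) else 0)"
  by (simp add: kl_inc_def)

text \<open>The number of plays of arm i that follow an observed state 1 is the total reward of
  arm i minus its last reward.\<close>
lemma cumulative_kl_inc:
  "cumulative (kl_inc i d0 d1) h = (if arm_obs i h = [] then 0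
    else d0 * (plays i h - 1) + (d1 - d0) * (centred_reward m i h + m * plays i h - of_bool (last (arm_obs i h))))"
proof (induction h rule: rev_induct)
  case (snoc x h)
  show ?case
  proof (cases "fst x = i")
    case False
    then show ?thesis using snoc
      by (simp only: centred_reward_snoc cumulative_kl_inc_snoc arm_obs_snoc plays_snoc if_False) simp
  next
    case True
    then show ?thesis using snoc centred_reward_unplayed[of i h m] plays_unplayed[of i h]
      by (simp only: centred_reward_snoc cumulative_kl_inc_snoc arm_obs_snoc plays_snoc if_True)
        (cases "arm_obs i h = []"; simp add: algebra_simps)
  qed
qed simp

lemma expected_llr_le:
  assumes pol: "is_policy K pol" and ok: "perturbation K i p01 p10 q01 q10"
  defines "d0 \<equiv> bern_div (p01 i) (q01 i)" and "d1 \<equiv> bern_div (p10 i) (q10 i)"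
  shows "EE (traj pol p01 p10 init n) (cumulative (llr (next_state p01 p10 init) (next_state q01 q10 init)))
     \<le> markov_kl p01 p10 i (q01 i) (q10 i) * EE (traj pol p01 p10 init n) (plays i)
        + (\<bar>d0\<bar> + \<bar>d1 - d0\<bar> + \<bar>d1 - d0\<bar> * (2 / (p01 i + p10 i)))"
proof -
  let ?P = "traj pol p01 p10 init n"
  define m where "m = mu p01 p10 i"
  have fp: "finite_policy pol" by (rule is_policy_imp_finite_policy[OF pol])
  have fin: "finite (set_pmf ?P)" by (rule finite_set_pmf_traj[OF pol])
  have v: "0 < p01 i" "p01 i \<le> 1" "0 < p10 i" "p10 i \<le> 1"
    using ok by (auto simp: perturbation_def valid_instance_def)
  have I: "markov_kl p01 p10 i (q01 i) (q10 i) = (1 - m) * d0 + m * d1"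
    using v by (simp add: markov_kl_def d0_def d1_def m_def mu_def pi0_def pi1_def field_simps)
  define W where "W h = (if arm_obs i h = [] then 0 else - d0 - (d1 - d0) * of_bool (last (arm_obs i h)))" for h
  have W: "EE ?P W \<le> \<bar>d0\<bar> + \<bar>d1 - d0\<bar>"
  proof -
    have "\<bar>W h\<bar> \<le> \<bar>d0\<bar> + \<bar>d1 - d0\<bar>" for h
      by (cases "last (arm_obs i h)") (auto simp: W_def)
    then have "EE ?P (\<lambda>h. \<bar>W h\<bar>) \<le> \<bar>d0\<bar> + \<bar>d1 - d0\<bar>"
      using expectation_mono[OF fin, of "\<lambda>h. \<bar>W h\<bar>" "\<lambda>_. \<bar>d0\<bar> + \<bar>d1 - d0\<bar>"] by simp
    then show ?thesis using expectation_abs_le[OF fin, of W] by linarith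
  qed
  have S: "(d1 - d0) * EE ?P (centred_reward m i) \<le> \<bar>d1 - d0\<bar> * (2 / (p01 i + p10 i))"
  proof -
    have "(d1 - d0) * EE ?P (centred_reward m i) \<le> \<bar>d1 - d0\<bar> * \<bar>EE ?P (centred_reward m i)\<bar>"
      by (simp only: abs_mult[symmetric] abs_ge_self)
    also have "\<dots> \<le> \<bar>d1 - d0\<bar> * (2 / (p01 i + p10 i))"
      unfolding m_def by (intro mult_left_mono expectation_centred_reward_bound fp v) auto
    finally show ?thesis .
  qed
  have "EE ?P (cumulative (llr (next_state p01 p10 init) (next_state q01 q10 init))) =
      EE ?P (cumulative (kl_inc i d0 d1))"
    unfolding traj_eq_history_pmf d0_def d1_def
    by (subst expectation_cumulative_compensator[OF fp]) (simp add: compensator_llr_perturbation[OF ok])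
  also have "\<dots> = EE ?P (\<lambda>h. ((1 - m) * d0 + m * d1) * plays i h + W h + (d1 - d0) * centred_reward m i h)"
    using centred_reward_unplayed[of i _ m] plays_unplayed[of i]
    by (intro expectation_cong) (auto simp: cumulative_kl_inc[where m=m] W_def algebra_simps)
  also have "\<dots> = ((1 - m) * d0 + m * d1) * EE ?P (plays i) + EE ?P W + (d1 - d0) * EE ?P (centred_reward m i)"
    by (simp add: expectation_add fin)
  finally show ?thesis unfolding I using W S by linarith
qed

lemma markov_inequality_finite:
  assumes fin: "finite (set_pmf M)" and X: "\<And>x. 0 \<le> X x" and c: "c > 0"
  shows "EE M (\<lambda>x. of_bool (c \<le> X x)) \<le> EE M X / c"
proof -
  have "EE M (\<lambda>x. of_bool (c \<le> X x)) \<le> EE M (\<lambda>x. X x / c)"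
    using X c by (intro expectation_mono fin) (auto simp: field_simps)
  then show ?thesis by simp
qed

lemma prob_suboptimal_arms_played_often:
  assumes ug: "uniformly_good K pol" and vi: "valid_instance K p01 p10"
    and S: "S \<subseteq> {1..K}" "\<forall>j\<in>S. mu p01 p10 j < mu_star K p01 p10"
    and "\<beta> > 0" "\<epsilon> > 0"
  shows "eventually (\<lambda>n. EE (traj pol p01 p10 init n) (\<lambda>h. of_bool (real n \<le> 2 * (\<Sum>j\<in>S. plays j h)))
      \<le> \<epsilon> * real n powr (\<beta> - 1)) sequentially"
proof -
  define \<epsilon>' where "\<epsilon>' = \<epsilon> / (2 * real (card S) + 1)"
  have "\<epsilon>' > 0" using \<open>\<epsilon> > 0\<close> by (simp add: \<epsilon>'_def)
  have card: "2 * real (card S) * \<epsilon>' \<le> \<epsilon>"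
    using \<open>\<epsilon> > 0\<close> by (simp add: \<epsilon>'_def field_simps)
  have fin_S: "finite S" using S(1) finite_subset by blast
  have pol: "is_policy K pol" using ug by (simp add: uniformly_good_def)
  have "eventually (\<lambda>n. \<forall>j\<in>S. EE (traj pol p01 p10 init n) (plays j) \<le> \<epsilon>' * real n powr \<beta>) sequentially"
    using S \<open>\<beta> > 0\<close> \<open>\<epsilon>' > 0\<close> fin_S
    by (intro eventually_ball_finite ballI expected_plays_suboptimal_small[OF ug vi]) auto
  moreover have "eventually (\<lambda>n. n \<ge> 1) sequentially" by (rule eventually_ge_at_top)
  ultimately show ?thesis
  proof eventually_elim
    case (elim n)
    let ?P = "traj pol p01 p10 init n"
    have n: "real n > 0" using elim(2) by simp
    have "EE ?P (\<lambda>h. of_bool (real n \<le> 2 * (\<Sum>j\<in>S. plays j h)))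
        = EE ?P (\<lambda>h. of_bool (real n / 2 \<le> (\<Sum>j\<in>S. plays j h)))"
      by (intro expectation_cong) auto
    also have "\<dots> \<le> EE ?P (\<lambda>h. \<Sum>j\<in>S. plays j h) / (real n / 2)"
      using n by (intro markov_inequality_finite finite_set_pmf_traj[OF pol] sum_nonneg plays_nonneg) auto
    also have "\<dots> = (2 / real n) * (\<Sum>j\<in>S. EE ?P (plays j))"
      by (simp add: expectation_sum finite_set_pmf_traj[OF pol])
    also have "\<dots> \<le> (2 / real n) * (real (card S) * (\<epsilon>' * real n powr \<beta>))"
      using elim(1) n sum_mono[of S "\<lambda>j. EE ?P (plays j)" "\<lambda>_. \<epsilon>' * real n powr \<beta>"]
      by (intro mult_left_mono) auto
    also have "\<dots> = (2 * real (card S) * \<epsilon>') * real n powr (\<beta> - 1)"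
      using n by (simp add: powr_diff field_simps)
    also have "\<dots> \<le> \<epsilon> * real n powr (\<beta> - 1)"
      using card by (intro mult_right_mono) auto
    finally show ?case .
  qed
qed

lemma prob_suboptimal_arm_rarely_played:
  assumes ug: "uniformly_good K pol" and vi: "valid_instance K p01 p10"
    and iK: "i \<in> {1..K}" and sub: "mu p01 p10 i < mu_star K p01 p10"
    and \<delta>: "0 < \<delta>"
  shows "eventually (\<lambda>n. 1 - \<delta> \<le> EE (traj pol p01 p10 init n) (\<lambda>h. of_bool (2 * plays i h \<le> real n)))
    sequentially"
proof -
  have pol: "is_policy K pol" using ug by (simp add: uniformly_good_def)
  have "eventually (\<lambda>n. EE (traj pol p01 p10 init n)
      (\<lambda>h. of_bool (real n \<le> 2 * (\<Sum>j\<in>{i}. plays j h))) \<le> \<delta> * real n powr (1 - 1)) sequentially"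
    using iK sub \<delta> by (intro prob_suboptimal_arms_played_often[OF ug vi]) auto
  then show ?thesis
  proof eventually_elim
    case (elim n)
    let ?P = "traj pol p01 p10 init n"
    have "\<delta> * real n powr (1 - 1) \<le> \<delta>" using \<delta> by simp
    then have "1 - \<delta> \<le> EE ?P (\<lambda>h. 1 - of_bool (real n \<le> 2 * (\<Sum>j\<in>{i}. plays j h)))"
      using elim(1) by (simp add: expectation_diff finite_set_pmf_traj[OF pol])
    also have "\<dots> \<le> EE ?P (\<lambda>h. of_bool (2 * plays i h \<le> real n))"
      by (intro expectation_mono finite_set_pmf_traj[OF pol]) auto
    finally show ?case .
  qed
qed

lemma prob_unique_best_arm_rarely_played:
  assumes ug: "uniformly_good K pol" and vi: "valid_instance K p01 p10"
    and iK: "i \<in> {1..K}" and best: "\<forall>j\<in>{1..K} - {i}. mu p01 p10 j < mu p01 p10 i" and \<beta>: "0 < \<beta>"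
  shows "eventually (\<lambda>n. EE (traj pol p01 p10 init n) (\<lambda>h. of_bool (2 * plays i h \<le> real n))
    \<le> real n powr (\<beta> - 1)) sequentially"
proof -
  have pol: "is_policy K pol" using ug by (simp add: uniformly_good_def)
  have "\<forall>a\<in>{1..K}. mu p01 p10 a \<le> mu p01 p10 i"
  proof
    fix a assume a: "a \<in> {1..K}"
    show "mu p01 p10 a \<le> mu p01 p10 i"
    proof (cases "a = i")
      case False
      with a have "a \<in> {1..K} - {i}" by simp
      then show ?thesis by (rule less_imp_le[OF bspec[OF best]])
    qed simp
  qed
  then have "mu_star K p01 p10 = mu p01 p10 i"
    by (rule mu_star_eq[OF iK])
  then have "eventually (\<lambda>n. EE (traj pol p01 p10 init n)
      (\<lambda>h. of_bool (real n \<le> 2 * (\<Sum>j\<in>{1..K} - {i}. plays j h))) \<le> 1 * real n powr (\<beta> - 1)) sequentially"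
    using best \<beta> by (intro prob_suboptimal_arms_played_often[OF ug vi]) auto
  then show ?thesis
  proof eventually_elim
    case (elim n)
    let ?P = "traj pol p01 p10 init n"
    have "EE ?P (\<lambda>h. of_bool (2 * plays i h \<le> real n)) \<le>
        EE ?P (\<lambda>h. of_bool (real n \<le> 2 * (\<Sum>j\<in>{1..K} - {i}. plays j h)))"
    proof (intro expectation_mono finite_set_pmf_traj[OF pol])
      fix h assume h: "h \<in> set_pmf ?P"
      show "of_bool (2 * plays i h \<le> real n) \<le> (of_bool (real n \<le> 2 * (\<Sum>j\<in>{1..K} - {i}. plays j h)) :: real)"
        using sum_plays_other_arms[OF set_pmf_traj(2)[OF pol h] iK] set_pmf_traj(1)[OF pol h] by auto
    qed
    then show ?case using elim by simp
  qed
qed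

text \<open>Lai-Robbins change of measure: the event that arm i is played at most half of the time
  is likely under the original instance but unlikely under a perturbation in which arm i is the
  unique best arm, which forces a logarithmic expected log-likelihood ratio.\<close>
lemma expected_llr_ge_log:
  assumes ug: "uniformly_good K pol" and ok: "perturbation K i p01 p10 q01 q10"
    and sub: "mu p01 p10 i < mu_star K p01 p10"
    and best: "\<forall>j\<in>{1..K} - {i}. mu q01 q10 j < mu q01 q10 i"
    and \<beta>: "0 < \<beta>" "\<beta> < 1" and \<delta>: "0 < \<delta>" "\<delta> < 1"
  shows "eventually (\<lambda>n. (1 - \<delta>) * (1 - \<beta>) * ln (real n) - 2 \<le>
    EE (traj pol p01 p10 init n) (cumulative (llr (next_state p01 p10 init) (next_state q01 q10 init))))
    sequentially"
proof -
  have vi: "valid_instance K p01 p10" and iK: "i \<in> {1..K}" using ok by (auto simp: perturbation_def)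
  have vq: "valid_instance K q01 q10" by (rule valid_instance_perturbation[OF ok])
  have fp: "finite_policy pol"
    using ug is_policy_imp_finite_policy by (auto simp: uniformly_good_def)
  let ?ns = "next_state p01 p10 init" and ?ns' = "next_state q01 q10 init"
  have cm: "\<And>F. (\<And>h. 0 \<le> F h) \<Longrightarrow> EE (history_pmf pol ?ns n) (\<lambda>h. F h * exp (- cumulative (llr ?ns ?ns') h))
      \<le> EE (history_pmf pol ?ns' n) F" for n
    by (rule expectation_change_of_measure[OF fp kernel_abscont_perturbation[OF ok]])
  have "eventually (\<lambda>n. 1 - \<delta> \<le> EE (traj pol p01 p10 init n) (\<lambda>h. of_bool (2 * plays i h \<le> real n)))
      sequentially"
    using \<delta> by (intro prob_suboptimal_arm_rarely_played[OF ug vi iK sub])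
  moreover have "eventually (\<lambda>n. EE (traj pol q01 q10 init n) (\<lambda>h. of_bool (2 * plays i h \<le> real n))
      \<le> real n powr (\<beta> - 1)) sequentially"
    using \<beta> by (intro prob_unique_best_arm_rarely_played[OF ug vq iK best])
  ultimately show ?thesis using eventually_ge_at_top[of 1]
  proof eventually_elim
    case (elim n)
    show ?case
      using expectation_ge_log_of_event_bounds[OF finite_set_pmf_history_pmf[OF fp] cm] elim \<beta> \<delta>
      by (simp add: traj_eq_history_pmf)
  qed
qed

text \<open>Replacing the parameters of arm i by (p01 j * (1 - s), p10 j * (1 - s)^2) damps the
  transition out of state 1 more than the one into it, which lifts the stationary mean of
  arm i strictly above mu j while the parameters converge to those of arm j as s tends to 0.\<close>
lemma perturbation_towards_arm:
  assumes vi: "valid_instance K p01 p10" and "i \<in> {1..K}" "j \<in> {1..K}" and s: "0 < s" "s < 1"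
  shows "perturbation K i p01 p10 (p01(i := p01 j * (1 - s))) (p10(i := p10 j * (1 - s)^2))"
proof -
  have "0 < p01 j" "p01 j \<le> 1" "0 < p10 j" "p10 j \<le> 1"
    using vi \<open>j \<in> {1..K}\<close> by (auto simp: valid_instance_def)
  moreover have "0 < (1 - s)^2" "(1 - s)^2 < 1"
    using s mult_strict_mono[of "1 - s" 1 "1 - s" 1] by (auto simp: power2_eq_square)
  moreover have "a * t < 1" if "0 < a" "a \<le> 1" "0 < t" "t < 1" for a t :: real
    using that mult_right_mono[of a 1 t] by linarith
  ultimately show ?thesis
    using vi assms by (auto simp: perturbation_def)
qed

lemma mu_perturbation_towards_arm_gt:
  assumes "0 < p01 j" "0 < p10 j" and s: "0 < s" "s < 1"
  shows "mu p01 p10 j < mu (p01(i := p01 j * (1 - s))) (p10(i := p10 j * (1 - s)^2)) i"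
proof -
  have "mu (p01(i := p01 j * (1 - s))) (p10(i := p10 j * (1 - s)^2)) i
      = p01 j * (1 - s) / (p01 j * (1 - s) + p10 j * (1 - s)^2)"
    by (simp add: mu_def pi1_def)
  also have "\<dots> = p01 j / (p01 j + p10 j * (1 - s))"
  proof -
    have "p01 j * (1 - s) + p10 j * (1 - s)^2 = (1 - s) * (p01 j + p10 j * (1 - s))"
      by (simp add: power2_eq_square algebra_simps)
    then show ?thesis using s by simp
  qed
  also have "p01 j / (p01 j + p10 j) < \<dots>"
    using assms by (intro divide_strict_left_mono) (auto intro!: add_pos_nonneg mult_pos_pos)
  finally show ?thesis by (simp add: mu_def pi1_def)
qed

lemma plays_lower_bound_perturbation_towards_best:
  assumes ug: "uniformly_good K pol" and vi: "valid_instance K p01 p10"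
    and iK: "i \<in> {2..K}" and best1: "\<forall>j\<in>{1..K}. mu p01 p10 j \<le> mu p01 p10 1"
    and sub: "mu p01 p10 i < mu p01 p10 1"
    and s: "0 < s" "s < 1" and \<beta>: "0 < \<beta>" "\<beta> < 1" and \<delta>: "0 < \<delta>" "\<delta> < 1"
  shows "\<exists>C. eventually (\<lambda>n. (1 - \<delta>) * (1 - \<beta>) * ln (real n) \<le>
    markov_kl p01 p10 i (p01 1 * (1 - s)) (p10 1 * (1 - s)^2) * EE (traj pol p01 p10 init n) (plays i) + C)
    sequentially"
proof -
  define q01 where "q01 = p01(i := p01 1 * (1 - s))"
  define q10 where "q10 = p10(i := p10 1 * (1 - s)^2)"
  have oK: "1 \<in> {1..K}" and i1: "i \<in> {1..K}" "i \<noteq> 1" using iK by auto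
  have pol: "is_policy K pol" using ug by (simp add: uniformly_good_def)
  have ok: "perturbation K i p01 p10 q01 q10"
    unfolding q01_def q10_def by (rule perturbation_towards_arm[OF vi i1(1) oK s])
  have "mu p01 p10 1 < mu q01 q10 i"
    unfolding q01_def q10_def using vi oK s
    by (intro mu_perturbation_towards_arm_gt) (auto simp: valid_instance_def)
  moreover have "mu q01 q10 j = mu p01 p10 j" if "j \<noteq> i" for j
    using that by (simp add: mu_def pi1_def q01_def q10_def)
  ultimately have best: "\<forall>j\<in>{1..K} - {i}. mu q01 q10 j < mu q01 q10 i"
    using best1 by fastforce
  have "mu p01 p10 i < mu_star K p01 p10"
    using sub mu_star_eq[OF oK best1] by simp
  from expected_llr_ge_log[OF ug ok this best \<beta> \<delta>, where init=init]
  have "eventually (\<lambda>n. (1 - \<delta>) * (1 - \<beta>) * ln (real n) \<le>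
      markov_kl p01 p10 i (q01 i) (q10 i) * EE (traj pol p01 p10 init n) (plays i) +
      (\<bar>bern_div (p01 i) (q01 i)\<bar> + \<bar>bern_div (p10 i) (q10 i) - bern_div (p01 i) (q01 i)\<bar>
       + \<bar>bern_div (p10 i) (q10 i) - bern_div (p01 i) (q01 i)\<bar> * (2 / (p01 i + p10 i)) + 2))
      sequentially"
    by eventually_elim (use expected_llr_le[OF pol ok, of init] in \<open>smt (verit)\<close>)
  then show ?thesis unfolding q01_def q10_def by auto
qed

section \<open>The information rate as a limit\<close>

lemma xlogxy_tendsto:
  assumes f: "(f \<longlongrightarrow> y) F" and y: "y > 0 \<or> x = 0"
  shows "((\<lambda>s. xlogxy x (f s)) \<longlongrightarrow> xlogxy x y) F"
proof (cases "x = 0")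
  case False
  then have "y \<noteq> 0" using y by auto
  then have "((\<lambda>s. x * ln (x / f s)) \<longlongrightarrow> x * ln (x / y)) F"
    using False by (intro tendsto_intros f) auto
  then show ?thesis using False by (simp add: xlogxy_def)
qed (simp add: xlogxy_def)

lemma bern_kl_finite:
  assumes "bern_kl a b \<noteq> \<infinity>"
  shows "bern_kl a b = ereal (bern_div a b)" and "\<not> ((b = 0 \<and> a \<noteq> 0) \<or> (b = 1 \<and> a \<noteq> 1))"
  using assms by (auto simp: bern_kl_def bern_div_def split: if_splits)

lemma bern_div_tendsto:
  assumes f: "(f \<longlongrightarrow> b) F" and b: "0 < b" "b \<le> 1" and fin: "bern_kl a b \<noteq> \<infinity>"
  shows "((\<lambda>x. bern_div a (f x)) \<longlongrightarrow> bern_div a b) F"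
proof -
  have "1 - b > 0 \<or> 1 - a = 0" using b bern_kl_finite(2)[OF fin] by auto
  then show ?thesis
    unfolding bern_div_def using b by (intro tendsto_add xlogxy_tendsto f tendsto_diff tendsto_const) auto
qed

lemma kl_rate_not_minf:
  assumes "0 < p01 i" "0 < p10 i"
  shows "kl_rate p01 p10 i j \<noteq> -\<infinity>"
proof -
  have p: "pi0 p01 p10 i > 0" "pi1 p01 p10 i > 0" using assms by (auto simp: pi0_def pi1_def)
  have "ereal c * bern_kl a b \<noteq> -\<infinity>" if "c > 0" for a b c
  proof -
    have "bern_kl a b \<noteq> -\<infinity>" by (simp add: bern_kl_def)
    with that show ?thesis by (cases "bern_kl a b") auto
  qed
  with p show ?thesis unfolding kl_rate_def by simp
qed

lemma kl_rate_eq_markov_kl: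
  assumes "0 < p01 i" "0 < p10 i" and kl: "kl_rate p01 p10 i j = ereal k"
  shows "bern_kl (p01 i) (p01 j) \<noteq> \<infinity>" "bern_kl (p10 i) (p10 j) \<noteq> \<infinity>"
    and "k = markov_kl p01 p10 i (p01 j) (p10 j)"
proof -
  have p: "pi0 p01 p10 i > 0" "pi1 p01 p10 i > 0" using assms by (auto simp: pi0_def pi1_def)
  have nm: "bern_kl a b \<noteq> -\<infinity>" for a b by (simp add: bern_kl_def)
  show fin1: "bern_kl (p01 i) (p01 j) \<noteq> \<infinity>" and fin2: "bern_kl (p10 i) (p10 j) \<noteq> \<infinity>"
    using kl p nm[of "p01 i" "p01 j"] nm[of "p10 i" "p10 j"]
    by (cases "bern_kl (p01 i) (p01 j)"; cases "bern_kl (p10 i) (p10 j)"; simp add: kl_rate_def)+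
  show "k = markov_kl p01 p10 i (p01 j) (p10 j)"
    using kl unfolding kl_rate_def bern_kl_finite(1)[OF fin1] bern_kl_finite(1)[OF fin2]
    by (simp add: markov_kl_def)
qed

lemma markov_kl_tendsto:
  assumes vi: "valid_instance K p01 p10" and "i \<in> {1..K}" "j \<in> {1..K}"
    and kl: "kl_rate p01 p10 i j = ereal k" and f: "(f \<longlongrightarrow> p01 j) F" and g: "(g \<longlongrightarrow> p10 j) F"
  shows "((\<lambda>x. markov_kl p01 p10 i (f x) (g x)) \<longlongrightarrow> k) F"
proof -
  have v: "0 < p01 i" "0 < p10 i" "0 < p01 j" "p01 j \<le> 1" "0 < p10 j" "p10 j \<le> 1"
    using vi assms(2,3) by (auto simp: valid_instance_def)
  note fin = kl_rate_eq_markov_kl[OF v(1,2) kl]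
  show ?thesis
    unfolding fin(3) markov_kl_def
    by (intro tendsto_intros bern_div_tendsto f g fin(1,2) v(3-6))
qed

lemma markov_kl_towards_arm_less:
  assumes vi: "valid_instance K p01 p10" and iK: "i \<in> {1..K}" and jK: "j \<in> {1..K}"
    and kl: "kl_rate p01 p10 i j = ereal k" and kB: "k < B"
  obtains s where "0 < s" "s < 1" "markov_kl p01 p10 i (p01 j * (1 - s)) (p10 j * (1 - s)^2) < B"
proof -
  have "((\<lambda>s. p01 j * (1 - s)) \<longlongrightarrow> p01 j) (at_right (0::real))"
    by (rule tendsto_eq_intros) (rule tendsto_intros | simp)+
  moreover have "((\<lambda>s. p10 j * (1 - s)^2) \<longlongrightarrow> p10 j) (at_right (0::real))"
    by (rule tendsto_eq_intros) (rule tendsto_intros | simp)+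
  ultimately have "((\<lambda>s. markov_kl p01 p10 i (p01 j * (1 - s)) (p10 j * (1 - s)^2)) \<longlongrightarrow> k) (at_right 0)"
    by (intro markov_kl_tendsto[OF vi iK jK kl])
  then have "eventually (\<lambda>s. markov_kl p01 p10 i (p01 j * (1 - s)) (p10 j * (1 - s)^2) < B) (at_right 0)"
    using kB by (rule order_tendstoD(2))
  moreover have "eventually (\<lambda>s. 0 < s \<and> s < (1::real)) (at_right 0)"
    unfolding eventually_at_right_field by (intro exI[of _ 1]) auto
  ultimately have "eventually (\<lambda>s. 0 < s \<and> s < 1 \<and>
      markov_kl p01 p10 i (p01 j * (1 - s)) (p10 j * (1 - s)^2) < B) (at_right (0::real))"
    by eventually_elim auto
  then obtain s where "0 < s \<and> s < 1 \<and> markov_kl p01 p10 i (p01 j * (1 - s)) (p10 j * (1 - s)^2) < B"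
    using eventually_happens'[OF trivial_limit_at_right_real] by blast
  with that show ?thesis by blast
qed

lemma kl_rate_ratio_bound:
  assumes "0 < p01 i" "0 < p10 i" "0 \<le> D" "0 < r" and r: "ereal r < ereal D / kl_rate p01 p10 i j"
  obtains k where "kl_rate p01 p10 i j = ereal k" "0 \<le> k" "r * k < D" "0 < D"
proof -
  have "D \<noteq> 0"
  proof
    assume "D = 0"
    moreover have "ereal 0 / x = 0" for x :: ereal
      by (cases x) (auto simp: divide_ereal_def)
    ultimately show False using r \<open>0 < r\<close> by simp
  qed
  then have D: "0 < D" using \<open>0 \<le> D\<close> by simp
  show ?thesis
  proof (cases "kl_rate p01 p10 i j")
    case (real k)
    have "0 \<le> k \<and> r * k < D"
    proof (cases "k = 0")
      case False
      then have "ereal r < ereal (D / k)" using r real by (simp add: divide_ereal_def divide_inverse)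
      then have rk: "r < D / k" by simp
      have "0 < k"
      proof (rule ccontr)
        assume "\<not> 0 < k"
        with False have "D / k \<le> 0" using D divide_pos_neg[of D k] by simp
        then show False using rk \<open>0 < r\<close> by linarith
      qed
      then show ?thesis using rk by (simp add: field_simps)
    qed (use D in simp)
    then show ?thesis using that[OF real] D by blast
  next
    case PInf
    then show ?thesis using r \<open>0 < r\<close> by (simp add: divide_ereal_def)
  next
    case MInf
    then show ?thesis using kl_rate_not_minf[of p01 i p10 j] assms(1,2) by simp
  qed
qed

section \<open>The lower bound\<close>

lemma eventually_ge_log_of_linear_bound:
  fixes X :: "nat \<Rightarrow> real"
  assumes rI: "r * I < D * c" and D: "D > 0" and c: "c > 0" and X: "\<And>n. X n \<ge> 0"
    and ev: "eventually (\<lambda>n. c * ln (real n) \<le> I * X n + C) sequentially"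
  shows "eventually (\<lambda>n. r * ln (real n) \<le> D * X n) sequentially"
proof -
  define M where "M = max (D * C / (D * c - r * I)) (C / c) + 1"
  have "filterlim (\<lambda>n. ln (real n)) at_top sequentially" by real_asymp
  then have "eventually (\<lambda>n. M \<le> ln (real n)) sequentially"
    by (simp add: filterlim_at_top)
  with ev show ?thesis
  proof eventually_elim
    case (elim n)
    let ?L = "ln (real n)"
    have gap: "D * c - r * I > 0" using rI by simp
    have "C / c < ?L" using elim(2) unfolding M_def by linarith
    then have CL: "C < c * ?L" using c by (simp add: field_simps)
    show ?case
    proof (cases "I > 0")
      case True
      have "D * C / (D * c - r * I) < ?L" using elim(2) unfolding M_def by linarith
      then have "D * C \<le> (D * c - r * I) * ?L" using gap by (simp add: field_simps)
      then have "I * (r * ?L) \<le> D * (c * ?L - C)" by (simp add: algebra_simps)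
      also have "\<dots> \<le> D * (I * X n)" using elim(1) D by (intro mult_left_mono) auto
      finally have "I * (r * ?L) \<le> I * (D * X n)" by (simp add: algebra_simps)
      then show ?thesis using True by simp
    next
      case False
      then have "I * X n \<le> 0" using X[of n] by (simp add: mult_nonpos_nonneg)
      then show ?thesis using elim(1) CL by linarith
    qed
  qed
qed

lemma slack_below_ratio:
  fixes r k D :: real
  assumes "0 < r" "0 \<le> r * k" "r * k < D"
  obtains B \<eta> where "k < B" "0 < \<eta>" "\<eta> < 1" "r * B \<le> D * ((1 - \<eta>) * (1 - \<eta>))"
proof -
  define \<eta> where "\<eta> = (1 - r * k / D) / 4"
  define B where "B = k + (D - r * k) / (2 * r)"
  have "0 < D" using assms by linarith
  have "r * B = D * (1 - 2 * \<eta>)"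
    using assms \<open>0 < D\<close> by (simp add: B_def \<eta>_def field_simps)
  also have "\<dots> \<le> D * ((1 - \<eta>) * (1 - \<eta>))"
    using \<open>0 < D\<close> by (intro mult_left_mono) (auto simp: algebra_simps)
  finally have "r * B \<le> D * ((1 - \<eta>) * (1 - \<eta>))" .
  moreover have "k < B" "0 < \<eta>" "\<eta> < 1"
    using assms \<open>0 < D\<close> by (auto simp: B_def \<eta>_def field_simps)
  ultimately show ?thesis using that by blast
qed

lemma gap_weighted_plays_ge_log:
  assumes ug: "uniformly_good K pol" and vi: "valid_instance K p01 p10"
    and iK: "i \<in> {2..K}" and best1: "\<forall>j\<in>{1..K}. mu p01 p10 j \<le> mu p01 p10 1"
    and r: "ereal r < ereal (mu p01 p10 1 - mu p01 p10 i) / kl_rate p01 p10 i 1"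
  shows "eventually (\<lambda>n. r * ln (real n) \<le> (mu p01 p10 1 - mu p01 p10 i) * EE (traj pol p01 p10 init n) (plays i))
    sequentially"
proof -
  define D where "D = mu p01 p10 1 - mu p01 p10 i"
  have pol: "is_policy K pol" using ug by (simp add: uniformly_good_def)
  have i1K: "i \<in> {1..K}" and oK: "1 \<in> {1..K}" using iK by auto
  have "0 \<le> D" using best1 i1K by (simp add: D_def)
  have v: "0 < p01 i" "0 < p10 i" using vi i1K by (auto simp: valid_instance_def)
  have plays0: "\<And>n. 0 \<le> EE (traj pol p01 p10 init n) (plays i)" by (rule expected_plays_nonneg[OF pol])
  show ?thesis
  proof (cases "r \<le> 0")
    case True
    have "eventually (\<lambda>n. 1 \<le> n) sequentially" by (rule eventually_ge_at_top)
    then show ?thesis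
    proof eventually_elim
      case (elim n)
      have "r * ln (real n) \<le> 0" using True elim by (simp add: mult_nonpos_nonneg)
      also have "0 \<le> D * EE (traj pol p01 p10 init n) (plays i)" using \<open>0 \<le> D\<close> plays0 by simp
      finally show ?case by (simp add: D_def)
    qed
  next
    case False
    then obtain k where kl: "kl_rate p01 p10 i 1 = ereal k" and "0 \<le> k" "r * k < D" "0 < D"
      using kl_rate_ratio_bound[OF v \<open>0 \<le> D\<close> _ r[folded D_def]] by force
    have "0 \<le> r * k" using \<open>0 \<le> k\<close> False by simp
    then obtain B \<eta> where "k < B" and \<eta>: "0 < \<eta>" "\<eta> < 1" and B: "r * B \<le> D * ((1 - \<eta>) * (1 - \<eta>))"
      using slack_below_ratio[of r k D] \<open>r * k < D\<close> False by auto
    obtain s where s: "0 < s" "s < 1"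
      and Is: "markov_kl p01 p10 i (p01 1 * (1 - s)) (p10 1 * (1 - s)^2) < B"
      using markov_kl_towards_arm_less[OF vi i1K oK kl \<open>k < B\<close>] by blast
    have key: "r * markov_kl p01 p10 i (p01 1 * (1 - s)) (p10 1 * (1 - s)^2) < D * ((1 - \<eta>) * (1 - \<eta>))"
      using mult_strict_left_mono[OF Is, of r] False B by linarith
    have "mu p01 p10 i < mu p01 p10 1" using \<open>0 < D\<close> by (simp add: D_def)
    from plays_lower_bound_perturbation_towards_best[OF ug vi iK best1 this s \<eta> \<eta>, where init=init]
    obtain C where "eventually (\<lambda>n. (1 - \<eta>) * (1 - \<eta>) * ln (real n) \<le>
      markov_kl p01 p10 i (p01 1 * (1 - s)) (p10 1 * (1 - s)^2) * EE (traj pol p01 p10 init n) (plays i) + C)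
      sequentially" by blast
    from eventually_ge_log_of_linear_bound[OF key \<open>0 < D\<close> _ plays0 this]
    show ?thesis using \<eta> by (simp add: D_def)
  qed
qed

lemma ereal_less_add_split:
  assumes "ereal y < a + b" "a \<noteq> -\<infinity>" "b \<noteq> -\<infinity>"
  obtains y1 y2 where "ereal y1 < a" "ereal y2 < b" "y = y1 + y2"
proof (cases a)
  case (real t)
  show ?thesis
  proof (cases b)
    case (real u)
    then have "y < t + u" using assms \<open>a = ereal t\<close> by simp
    then show ?thesis using that \<open>a = ereal t\<close> real
      by (intro that[of "t - (t + u - y) / 2" "u - (t + u - y) / 2"]) auto
  next
    case PInf
    then show ?thesis using \<open>a = ereal t\<close> by (intro that[of "t - 1" "y - (t - 1)"]) auto
  qed (use assms in simp)
next
  case PInf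
  show ?thesis
  proof (cases b)
    case (real u)
    then show ?thesis using PInf by (intro that[of "y - (u - 1)" "u - 1"]) auto
  next
    case PInf
    then show ?thesis using \<open>a = \<infinity>\<close> by (intro that[of y 0]) auto
  qed (use assms in simp)
qed (use assms in simp)

lemma ereal_less_sum_split:
  assumes "finite A" "\<forall>i\<in>A. T i \<noteq> -\<infinity>" "ereal y < (\<Sum>i\<in>A. T i)"
  shows "\<exists>r. (\<forall>i\<in>A. ereal (r i) < T i) \<and> y < (\<Sum>i\<in>A. r i)"
  using assms
proof (induction A arbitrary: y rule: finite_induct)
  case empty
  then show ?case by simp
next
  case (insert a F)
  from insert.hyps(1) have "(\<Sum>i\<in>F. T i) \<noteq> -\<infinity>"
    using insert.prems(1) by (induction F rule: finite_induct) auto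
  moreover have "ereal y < T a + (\<Sum>i\<in>F. T i)" using insert by simp
  ultimately obtain y1 y2 where y: "ereal y1 < T a" "ereal y2 < (\<Sum>i\<in>F. T i)" "y = y1 + y2"
    using ereal_less_add_split insert.prems(1) by (metis insert_iff)
  obtain r where r: "\<forall>i\<in>F. ereal (r i) < T i" "y2 < (\<Sum>i\<in>F. r i)"
    using insert.IH[OF _ y(2)] insert.prems(1) by auto
  have "(\<Sum>i\<in>F. (r(a := y1)) i) = (\<Sum>i\<in>F. r i)"
    using insert.hyps by (intro sum.cong) auto
  then show ?case
    using insert.hyps y r by (intro exI[of _ "r(a := y1)"]) auto
qed

lemma suboptimal_gap_plays_le_regret:
  assumes pol: "is_policy K pol" and vi: "valid_instance K p01 p10" and K: "K \<ge> 1"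
    and best1: "\<forall>j\<in>{1..K}. mu p01 p10 j \<le> mu p01 p10 1"
  shows "(\<Sum>i\<in>{2..K}. (mu p01 p10 1 - mu p01 p10 i) * EE (traj pol p01 p10 init n) (plays i))
    \<le> regret K pol p01 p10 init n + (\<Sum>a\<in>{1..K}. 2 / (p01 a + p10 a))"
proof -
  have ms: "mu_star K p01 p10 = mu p01 p10 1" using K best1 by (intro mu_star_eq) auto
  have "(\<Sum>i\<in>{2..K}. (mu p01 p10 1 - mu p01 p10 i) * EE (traj pol p01 p10 init n) (plays i))
      \<le> (\<Sum>a\<in>{1..K}. (mu_star K p01 p10 - mu p01 p10 a) * EE (traj pol p01 p10 init n) (plays a))"
    unfolding ms using best1 by (intro sum_mono2 mult_nonneg_nonneg expected_plays_nonneg[OF pol]) auto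
  then show ?thesis using regret_gap_decomposition[OF pol vi, of init n] by linarith
qed

lemma regret_div_ln_eventually_gt:
  assumes K: "K \<ge> 1" and vi: "valid_instance K p01 p10"
    and best1: "\<forall>j\<in>{1..K}. mu p01 p10 j \<le> mu p01 p10 1" and ug: "uniformly_good K pol"
    and r: "\<forall>i\<in>{2..K}. ereal (r i) < ereal (mu p01 p10 1 - mu p01 p10 i) / kl_rate p01 p10 i 1"
    and y: "y < (\<Sum>i\<in>{2..K}. r i)"
  shows "eventually (\<lambda>n. y < regret K pol p01 p10 init n / ln (real n)) sequentially"
proof -
  let ?N = "\<lambda>a n. EE (traj pol p01 p10 init n) (plays a)"
  define C where "C = (\<Sum>a\<in>{1..K}. 2 / (p01 a + p10 a))"
  define R where "R = (\<Sum>i\<in>{2..K}. r i)"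
  have pol: "is_policy K pol" using ug by (simp add: uniformly_good_def)
  have "C \<ge> 0" unfolding C_def
  proof (intro sum_nonneg)
    fix a assume "a \<in> {1..K}"
    then have "0 < p01 a" "0 < p10 a" using vi unfolding valid_instance_def by auto
    then show "0 \<le> 2 / (p01 a + p10 a)" by simp
  qed
  have "eventually (\<lambda>n. \<forall>i\<in>{2..K}. r i * ln (real n) \<le> (mu p01 p10 1 - mu p01 p10 i) * ?N i n) sequentially"
    using r by (intro eventually_ball_finite ballI gap_weighted_plays_ge_log[OF ug vi _ best1]) auto
  moreover have "filterlim (\<lambda>n. ln (real n)) at_top sequentially" by real_asymp
  then have "eventually (\<lambda>n. (C + 1) / (R - y) + 1 \<le> ln (real n)) sequentially"
    by (simp add: filterlim_at_top)
  ultimately show ?thesis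
  proof eventually_elim
    case (elim n)
    have Ry: "R - y > 0" using y by (simp add: R_def)
    have "0 < ln (real n)" using elim(2) Ry \<open>C \<ge> 0\<close> by (smt (verit) divide_nonneg_pos)
    have "C < (R - y) * ln (real n)"
      using elim(2) Ry by (simp add: field_simps)
    moreover have "R * ln (real n) \<le> (\<Sum>i\<in>{2..K}. (mu p01 p10 1 - mu p01 p10 i) * ?N i n)"
      using elim(1) unfolding R_def sum_distrib_right by (intro sum_mono) auto
    ultimately have "y * ln (real n) < regret K pol p01 p10 init n"
      using suboptimal_gap_plays_le_regret[OF pol vi K best1, of init n] unfolding C_def
      by (simp add: algebra_simps)
    then show ?case using \<open>0 < ln (real n)\<close> by (simp add: field_simps)
  qed
qed

theorem theorem3:
  fixes K :: nat and p01 p10 :: "nat \<Rightarrow> real" and init :: "nat \<Rightarrow> bool" and pol :: policy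
  assumes "K \<ge> 1"
    and "valid_instance K p01 p10"
    and "\<forall>j\<in>{1..K}. mu p01 p10 j \<le> mu p01 p10 1"
    and "uniformly_good K pol"
  shows "liminf (\<lambda>n. ereal (regret K pol p01 p10 init n / ln (real n)))
           \<ge> (\<Sum>i\<in>{2..K}. ereal (mu p01 p10 1 - mu p01 p10 i) / kl_rate p01 p10 i 1)"
  unfolding le_Liminf_iff
proof (intro allI impI)
  let ?T = "\<lambda>i. ereal (mu p01 p10 1 - mu p01 p10 i) / kl_rate p01 p10 i 1"
  fix y :: ereal
  assume y: "y < (\<Sum>i\<in>{2..K}. ?T i)"
  have "\<forall>i\<in>{2..K}. ?T i \<noteq> -\<infinity>"
  proof
    fix i assume "i \<in> {2..K}"
    then have "0 \<le> mu p01 p10 1 - mu p01 p10 i" using assms(3) by simp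
    then show "?T i \<noteq> -\<infinity>" by (cases "kl_rate p01 p10 i 1") (auto simp: divide_ereal_def)
  qed
  then show "eventually (\<lambda>n. y < ereal (regret K pol p01 p10 init n / ln (real n))) sequentially"
    using y
  proof (cases y)
    case (real y0)
    then obtain r where "\<forall>i\<in>{2..K}. ereal (r i) < ?T i" "y0 < (\<Sum>i\<in>{2..K}. r i)"
      using ereal_less_sum_split[of "{2..K}" ?T y0] \<open>\<forall>i\<in>{2..K}. ?T i \<noteq> -\<infinity>\<close> y by auto
    from regret_div_ln_eventually_gt[OF assms this] show ?thesis by (simp add: real)
  qed auto
qed

end
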